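(* Let $j,k$ be two settings with short-regression parameters $\theta^j_s,\theta^k_s$ and bias bounds $\nu^j_l=-\nu^{j*}$, $\nu^j_u=\nu^{j*}$, $\nu^k_l=-\nu^{k*}$, $\nu^k_u=\nu^{k*}$ with $\nu^{j*},\nu^{k*}>0$, and suppose the proportionality bounds are symmetric: $\rho^{jk}\in[1/\rho^{jk}_u,\rho^{jk}_u]$ with $\rho^{jk}_u\ge1$. Let $\mathbb{C}^{jk}=\{\frac{1-\rho^{jk}_u}{\rho^{jk}_u}\nu^k_l,(\rho^{jk}_u-1)\nu^k_l,\frac{1-\rho^{jk}_u}{\rho^{jk}_u}\nu^k_u,(\rho^{jk}_u-1)\nu^k_u\}$, $c^{jk}_l=\min\mathbb{C}^{jk}$, $c^{jk}_u=\max\mathbb{C}^{jk}$. Then $c^{jk}_u=(\rho^{jk}_u-1)\nu^{k*}$ and $c^{jk}_l=-(\rho^{jk}_u-1)\nu^{k*}$, and the marginal sharpening conditions — namely (1) $\nu^k_u+c^{jk}_u<\nu^j_u$ or (2) $\nu^k_l+c^{jk}_l>\nu^j_l$ — reduce to $\nu^{j*}>\rho^{jk}_u\nu^{k*}$. In particular, when $\nu^{j*}=\nu^{k*}$, strict marginal sharpening never occurs for any $\rho^{jk}_u>1$, i.e. $\mathrm{proj}_j(\mathcal{J}^{jk})=\mathcal{I}^j$.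
   Context: Here $\mathcal{I}^i=[\theta^i_s-\nu^i_u,\theta^i_s-\nu^i_l]$ for $i\in\{j,k\}$, $\mathcal{I}^{jk}_D=[(\theta^j_s-\theta^k_s)-c^{jk}_u,(\theta^j_s-\theta^k_s)-c^{jk}_l]$, $\mathcal{J}^{jk}=\{(\theta^j,\theta^k):\theta^j\in\mathcal{I}^j,\theta^k\in\mathcal{I}^k,\theta^j-\theta^k\in\mathcal{I}^{jk}_D\}$, and $\mathrm{proj}_j(\mathcal{J}^{jk})=\{\theta^j:\exists\theta^k,(\theta^j,\theta^k)\in\mathcal{J}^{jk}\}$. Strict marginal sharpening means $\mathrm{proj}_j(\mathcal{J}^{jk})\subsetneq\mathcal{I}^j$, which holds if and only if condition (1) or (2) holds. In the paper's framework, $\theta^i$ is a setting-specific causal effect, $\theta^i_s$ the corresponding omitted-variable short-regression parameter, the bias $B^i=\theta^i_s-\theta^i$ lies in $[\nu^i_l,\nu^i_u]$, and $B^j=\rho^{jk}B^k$. *)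

theory Defs
  imports Complex_Main
begin

definition ident_int :: "real \<Rightarrow> real \<Rightarrow> real \<Rightarrow> real set" where
  "ident_int \<theta>s \<nu>l \<nu>u = {\<theta>s - \<nu>u .. \<theta>s - \<nu>l}"

definition Cset :: "real \<Rightarrow> real \<Rightarrow> real \<Rightarrow> real set" where
  "Cset \<rho>u \<nu>kl \<nu>ku = {(1 - \<rho>u) / \<rho>u * \<nu>kl, (\<rho>u - 1) * \<nu>kl,
                        (1 - \<rho>u) / \<rho>u * \<nu>ku, (\<rho>u - 1) * \<nu>ku}"

definition c_l :: "real \<Rightarrow> real \<Rightarrow> real \<Rightarrow> real" where
  "c_l \<rho>u \<nu>kl \<nu>ku = Min (Cset \<rho>u \<nu>kl \<nu>ku)"

definition c_u :: "real \<Rightarrow> real \<Rightarrow> real \<Rightarrow> real" where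
  "c_u \<rho>u \<nu>kl \<nu>ku = Max (Cset \<rho>u \<nu>kl \<nu>ku)"

definition diff_int :: "real \<Rightarrow> real \<Rightarrow> real \<Rightarrow> real \<Rightarrow> real set" where
  "diff_int \<theta>js \<theta>ks cl cu = {(\<theta>js - \<theta>ks) - cu .. (\<theta>js - \<theta>ks) - cl}"

definition joint_set :: "real \<Rightarrow> real \<Rightarrow> real \<Rightarrow> real \<Rightarrow> real \<Rightarrow> real \<Rightarrow> real \<Rightarrow> real
    \<Rightarrow> (real \<times> real) set" where
  "joint_set \<theta>js \<theta>ks \<nu>jl \<nu>ju \<nu>kl \<nu>ku cl cu =
     {(tj, tk). tj \<in> ident_int \<theta>js \<nu>jl \<nu>ju \<and> tk \<in> ident_int \<theta>ks \<nu>kl \<nu>ku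
              \<and> tj - tk \<in> diff_int \<theta>js \<theta>ks cl cu}"

definition proj_j :: "(real \<times> real) set \<Rightarrow> real set" where
  "proj_j S = {tj. \<exists>tk. (tj, tk) \<in> S}"

end

theory Submission
  imports Defs
begin

text \<open>In bias coordinates \<open>B = \<theta>\<^sub>s - \<theta>\<close> a point of the j-interval survives the projection
  iff some admissible \<open>B\<^sup>k \<in> [\<nu>\<^sup>k\<^sub>l, \<nu>\<^sup>k\<^sub>u]\<close> has \<open>B\<^sup>j - B\<^sup>k \<in> [c\<^sub>l, c\<^sub>u]\<close>. When neither
  sharpening condition holds, the clamped value \<open>B\<^sup>k = max \<nu>\<^sup>k\<^sub>l (B\<^sup>j - c\<^sub>u)\<close> is such a witness
  for every \<open>B\<^sup>j\<close>, so the projection is the whole interval. In the symmetric case every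
  element of \<open>\<bbbC>\<^sup>j\<^sup>k\<close> has modulus at most \<open>(\<rho>\<^sub>u - 1) \<nu>\<^sup>k\<^sup>*\<close>, which is attained with both
  signs; with \<open>\<nu>\<^sup>j\<^sup>* = \<nu>\<^sup>k\<^sup>*\<close> the sharpening conditions then fail.\<close>

lemma proj_j_joint_set_subset:
  "proj_j (joint_set \<theta>js \<theta>ks \<nu>jl \<nu>ju \<nu>kl \<nu>ku cl cu) \<subseteq> ident_int \<theta>js \<nu>jl \<nu>ju"
  unfolding proj_j_def joint_set_def by auto

lemma proj_j_joint_set_eq_ident_int:
  fixes \<theta>js \<theta>ks \<nu>jl \<nu>ju \<nu>kl \<nu>ku cl cu :: real
  assumes "\<nu>kl \<le> \<nu>ku" and "cl \<le> cu"
    and "\<nu>ju \<le> \<nu>ku + cu" and "\<nu>kl + cl \<le> \<nu>jl"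
  shows "proj_j (joint_set \<theta>js \<theta>ks \<nu>jl \<nu>ju \<nu>kl \<nu>ku cl cu) = ident_int \<theta>js \<nu>jl \<nu>ju"
proof
  show "ident_int \<theta>js \<nu>jl \<nu>ju \<subseteq> proj_j (joint_set \<theta>js \<theta>ks \<nu>jl \<nu>ju \<nu>kl \<nu>ku cl cu)"
  proof
    fix tj assume tj: "tj \<in> ident_int \<theta>js \<nu>jl \<nu>ju"
    define bk where "bk = max \<nu>kl (\<theta>js - tj - cu)"
    have "(tj, \<theta>ks - bk) \<in> joint_set \<theta>js \<theta>ks \<nu>jl \<nu>ju \<nu>kl \<nu>ku cl cu"
      using tj assms unfolding joint_set_def ident_int_def diff_int_def bk_def by auto
    then show "tj \<in> proj_j (joint_set \<theta>js \<theta>ks \<nu>jl \<nu>ju \<nu>kl \<nu>ku cl cu)"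
      unfolding proj_j_def by blast
  qed
qed (rule proj_j_joint_set_subset)

lemma abs_one_minus_div_le:
  fixes \<rho> :: real
  assumes "\<rho> \<ge> 1"
  shows "\<bar>(1 - \<rho>) / \<rho>\<bar> \<le> \<rho> - 1"
proof -
  have "\<bar>(1 - \<rho>) / \<rho>\<bar> = (\<rho> - 1) / \<rho>"
    using assms by simp
  also have "\<dots> \<le> \<rho> - 1"
    using assms mult_left_mono[of 1 \<rho> "\<rho> - 1"] by (simp add: divide_le_eq)
  finally show ?thesis .
qed

lemma abs_le_of_mem_Cset_symmetric:
  fixes \<rho>u \<nu> :: real
  assumes "\<rho>u \<ge> 1" and "\<nu> \<ge> 0" and "x \<in> Cset \<rho>u (- \<nu>) \<nu>"
  shows "\<bar>x\<bar> \<le> (\<rho>u - 1) * \<nu>"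
proof -
  have "\<bar>(1 - \<rho>u) / \<rho>u\<bar> * \<nu> \<le> (\<rho>u - 1) * \<nu>"
    using abs_one_minus_div_le[OF assms(1)] assms(2) by (rule mult_right_mono)
  then show ?thesis
    using assms unfolding Cset_def by (auto simp: abs_mult)
qed

lemma c_u_symmetric:
  fixes \<rho>u \<nu> :: real
  assumes "\<rho>u \<ge> 1" and "\<nu> \<ge> 0"
  shows "c_u \<rho>u (- \<nu>) \<nu> = (\<rho>u - 1) * \<nu>"
  unfolding c_u_def
proof (rule Max_eqI)
  show "finite (Cset \<rho>u (- \<nu>) \<nu>)"
    unfolding Cset_def by simp
  show "(\<rho>u - 1) * \<nu> \<in> Cset \<rho>u (- \<nu>) \<nu>"
    unfolding Cset_def by simp
  show "x \<le> (\<rho>u - 1) * \<nu>" if "x \<in> Cset \<rho>u (- \<nu>) \<nu>" for x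
    using abs_le_of_mem_Cset_symmetric[OF assms that] by linarith
qed

lemma c_l_symmetric:
  fixes \<rho>u \<nu> :: real
  assumes "\<rho>u \<ge> 1" and "\<nu> \<ge> 0"
  shows "c_l \<rho>u (- \<nu>) \<nu> = - ((\<rho>u - 1) * \<nu>)"
  unfolding c_l_def
proof (rule Min_eqI)
  show "finite (Cset \<rho>u (- \<nu>) \<nu>)"
    unfolding Cset_def by simp
  show "- ((\<rho>u - 1) * \<nu>) \<in> Cset \<rho>u (- \<nu>) \<nu>"
    unfolding Cset_def by simp
  show "- ((\<rho>u - 1) * \<nu>) \<le> x" if "x \<in> Cset \<rho>u (- \<nu>) \<nu>" for x
    using abs_le_of_mem_Cset_symmetric[OF assms that] by linarith
qed

theorem corollary1:
  fixes \<theta>js \<theta>ks \<nu>jstar \<nu>kstar \<rho>u :: real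
  assumes "\<nu>jstar > 0" and "\<nu>kstar > 0" and "\<rho>u \<ge> 1"
  shows "c_u \<rho>u (- \<nu>kstar) \<nu>kstar = (\<rho>u - 1) * \<nu>kstar
       \<and> c_l \<rho>u (- \<nu>kstar) \<nu>kstar = - ((\<rho>u - 1) * \<nu>kstar)
       \<and> ((\<nu>kstar + c_u \<rho>u (- \<nu>kstar) \<nu>kstar < \<nu>jstar
            \<or> - \<nu>kstar + c_l \<rho>u (- \<nu>kstar) \<nu>kstar > - \<nu>jstar)
           \<longleftrightarrow> \<nu>jstar > \<rho>u * \<nu>kstar)
       \<and> (\<nu>jstar = \<nu>kstar \<and> \<rho>u > 1 \<longrightarrow>
           proj_j (joint_set \<theta>js \<theta>ks (- \<nu>jstar) \<nu>jstar (- \<nu>kstar) \<nu>kstar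
                     (c_l \<rho>u (- \<nu>kstar) \<nu>kstar) (c_u \<rho>u (- \<nu>kstar) \<nu>kstar))
           = ident_int \<theta>js (- \<nu>jstar) \<nu>jstar)"
proof -
  have "\<nu>kstar \<ge> 0" and "(\<rho>u - 1) * \<nu>kstar \<ge> 0"
    using assms by simp_all
  note cu = c_u_symmetric[OF \<open>\<rho>u \<ge> 1\<close> \<open>\<nu>kstar \<ge> 0\<close>]
   and cl = c_l_symmetric[OF \<open>\<rho>u \<ge> 1\<close> \<open>\<nu>kstar \<ge> 0\<close>]
  have sharpening_iff:
    "(\<nu>kstar + c_u \<rho>u (- \<nu>kstar) \<nu>kstar < \<nu>jstar
        \<or> - \<nu>kstar + c_l \<rho>u (- \<nu>kstar) \<nu>kstar > - \<nu>jstar)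
     \<longleftrightarrow> \<nu>jstar > \<rho>u * \<nu>kstar"
    unfolding cu cl by (auto simp: algebra_simps)
  have "proj_j (joint_set \<theta>js \<theta>ks (- \<nu>jstar) \<nu>jstar (- \<nu>kstar) \<nu>kstar
                  (c_l \<rho>u (- \<nu>kstar) \<nu>kstar) (c_u \<rho>u (- \<nu>kstar) \<nu>kstar))
        = ident_int \<theta>js (- \<nu>jstar) \<nu>jstar" if "\<nu>jstar = \<nu>kstar"
    using that \<open>\<nu>kstar \<ge> 0\<close> \<open>(\<rho>u - 1) * \<nu>kstar \<ge> 0\<close>
    by (intro proj_j_joint_set_eq_ident_int) (simp_all add: cu cl)
  with cu cl sharpening_iff show ?thesis
    by blast
qed

end
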